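(* Let $\mathsf G=(\mathsf V,\mathsf E)$ be a finite connected graph without loops or multiple edges, with discrete Laplacian $\mathcal L=\mathcal I\mathcal I^T$ acting on $\ell^2(\mathsf V)$. The following assertions are equivalent: (i) $\mathsf G$ is complete; (ii) the semigroup $(e^{-t\mathcal L^2})_{t\ge 0}$ is positive, i.e. $e^{-t\mathcal L^2}f$ has nonnegative entries for all $t\ge0$ and all $f$ with nonnegative entries; (iii) the semigroup $(e^{-t\mathcal L^2})_{t\ge0}$ is $\ell^\infty$-contractive, i.e. $\|e^{-t\mathcal L^2}f\|_\infty\le\|f\|_\infty$ for all $t\ge0$ and all $f\in\mathbb C^V$.
   Context: $V=|\mathsf V|$ and $\ell^2(\mathsf V)=\mathbb C^V$. After fixing an arbitrary orientation of the edges, the incidence matrix $\mathcal I\in\mathbb R^{V\times E}$ has entries $\iota_{\mathsf v\mathsf e}=-1$ if $\mathsf v$ is the initial endpoint of $\mathsf e$, $+1$ if $\mathsf v$ is the terminal endpoint of $\mathsf e$, and $0$ otherwise; $\mathcal L=\mathcal I\mathcal I^T$ is the discrete Laplacian (independent of the orientation). A graph is complete if every pair of distinct vertices is joined by exactly one edge. *)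

theory Defs
  imports "HOL-Analysis.Analysis"
begin

definition simple_graph :: "('v \<Rightarrow> 'v \<Rightarrow> bool) \<Rightarrow> bool" where
  "simple_graph E \<longleftrightarrow> (\<forall>u v. E u v \<longrightarrow> E v u) \<and> (\<forall>v. \<not> E v v)"

definition connected_graph :: "('v \<Rightarrow> 'v \<Rightarrow> bool) \<Rightarrow> bool" where
  "connected_graph E \<longleftrightarrow> (\<forall>u v. E\<^sup>*\<^sup>* u v)"

definition complete_graph :: "('v \<Rightarrow> 'v \<Rightarrow> bool) \<Rightarrow> bool" where
  "complete_graph E \<longleftrightarrow> (\<forall>u v. u \<noteq> v \<longrightarrow> E u v)"

text \<open>Discrete Laplacian L = I I^T, written out entrywise: the (u,u) entry is the
  degree of u, the (u,v) entry (u \<noteq> v) is -1 if u,v adjacent and 0 otherwise.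
  This is independent of the orientation chosen for the incidence matrix.\<close>

definition laplacian :: "('v::finite \<Rightarrow> 'v \<Rightarrow> bool) \<Rightarrow> real^'v^'v" where
  "laplacian E = (\<chi> u v. if u = v then real (card {w. E u w})
                          else if E u v then -1 else 0)"

definition mat_pow :: "real^'n^'n \<Rightarrow> nat \<Rightarrow> real^'n^'n" where
  "mat_pow A k = ((\<lambda>B. A ** B) ^^ k) (mat 1)"

definition mat_exp :: "real^'n^'n \<Rightarrow> real^'n^'n" where
  "mat_exp A = (\<Sum>k. (1 / fact k) *\<^sub>R mat_pow A k)"

definition mat_act :: "real^'v^'v \<Rightarrow> ('v::finite \<Rightarrow> complex) \<Rightarrow> 'v \<Rightarrow> complex" where
  "mat_act M f = (\<lambda>u. \<Sum>v\<in>UNIV. complex_of_real (M $ u $ v) * f v)"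

definition sup_norm :: "('v::finite \<Rightarrow> complex) \<Rightarrow> real" where
  "sup_norm f = Max (range (\<lambda>v. cmod (f v)))"

end

theory Submission
  imports Defs
begin

text \<open>The Laplacian L has zero row sums, so every matrix exp(-t L^2) has row sums 1, and for
  such a real matrix both positivity and \<open>\<ell>\<^sup>\<infinity>\<close>-contractivity amount to nonnegativity of its
  entries. For the complete graph on N vertices L = N P, where P = I - J/N is the projection
  onto the complement of the constants, hence exp(-t L^2) = exp(-t N^2) I + (1 - exp(-t N^2)) J/N
  is entrywise nonnegative. Otherwise connectedness yields non-adjacent vertices u, v with a common
  neighbour; then (L^2)(u,v) > 0, and exp(-t L^2) = I - t L^2 + O(t^2) has a negative (u,v) entry
  for small t > 0.\<close>

lemma matrix_mult_entry: "(A ** B) $ i $ j = (\<Sum>k\<in>UNIV. A $ i $ k * B $ k $ j)"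
  by (simp add: matrix_matrix_mult_def)

lemma mat_1_entry [simp]: "(mat 1 :: real^'n^'n) $ i $ j = (if i = j then 1 else 0)"
  by (simp add: mat_def)

lemma scaleR_matrix_mult_left: "((c::real) *\<^sub>R A) ** (B::real^'p^'n) = c *\<^sub>R (A ** B)"
  by (simp add: vec_eq_iff matrix_mult_entry sum_distrib_left mult_ac)

lemma scaleR_matrix_mult_right: "(A::real^'n^'m) ** ((c::real) *\<^sub>R B) = c *\<^sub>R (A ** B)"
  by (simp add: vec_eq_iff matrix_mult_entry sum_distrib_left mult_ac)

lemma mat_pow_0 [simp]: "mat_pow A 0 = mat 1"
  by (simp add: mat_pow_def)

lemma mat_pow_Suc: "mat_pow A (Suc k) = A ** mat_pow A k"
  by (simp add: mat_pow_def)

lemma mat_pow_scaleR: "mat_pow ((c::real) *\<^sub>R A) k = c ^ k *\<^sub>R mat_pow (A::real^'n^'n) k"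
  by (induction k) (simp_all add: mat_pow_Suc scaleR_matrix_mult_left scaleR_matrix_mult_right)

lemma mat_pow_idempotent:
  assumes "(P::real^'n^'n) ** P = P"
  shows "mat_pow P k = (if k = 0 then mat 1 else P)"
proof (induction k)
  case (Suc k)
  then show ?case by (cases k) (simp_all add: mat_pow_Suc assms)
qed simp

lemma mat_pow_mult_vec_zero:
  assumes "(A::real^'n^'n) *v x = 0"
  shows "mat_pow A k *v x = (if k = 0 then x else 0)"
  by (induction k) (simp_all add: mat_pow_Suc assms matrix_vector_mul_assoc[symmetric])

definition abs_entry_sum :: "real^'n^'m \<Rightarrow> real" where
  "abs_entry_sum A = (\<Sum>i\<in>UNIV. \<Sum>j\<in>UNIV. \<bar>A $ i $ j\<bar>)"

lemma abs_entry_sum_nonneg: "0 \<le> abs_entry_sum A"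
  unfolding abs_entry_sum_def by (auto intro: sum_nonneg)

lemma row_abs_sum_le_abs_entry_sum: "(\<Sum>j\<in>UNIV. \<bar>A $ i $ j\<bar>) \<le> abs_entry_sum A"
  unfolding abs_entry_sum_def
  by (rule member_le_sum[where f = "\<lambda>i. \<Sum>j\<in>UNIV. \<bar>A $ i $ j\<bar>"]) (auto intro: sum_nonneg)

lemma abs_entry_le_abs_entry_sum: "\<bar>A $ i $ j\<bar> \<le> abs_entry_sum A"
  using member_le_sum[of j UNIV "\<lambda>j. \<bar>A $ i $ j\<bar>"] row_abs_sum_le_abs_entry_sum[of A i]
  by simp

lemma abs_entry_sum_scaleR: "abs_entry_sum ((c::real) *\<^sub>R A) = \<bar>c\<bar> * abs_entry_sum A"
  by (simp add: abs_entry_sum_def abs_mult sum_distrib_left)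

lemma abs_mat_pow_entry_le: "\<bar>mat_pow A k $ i $ j\<bar> \<le> abs_entry_sum A ^ k"
proof (induction k arbitrary: i j)
  case (Suc k)
  have "\<bar>mat_pow A (Suc k) $ i $ j\<bar> \<le> (\<Sum>w\<in>UNIV. \<bar>A $ i $ w\<bar> * \<bar>mat_pow A k $ w $ j\<bar>)"
    unfolding mat_pow_Suc matrix_mult_entry by (rule order_trans[OF sum_abs]) (simp add: abs_mult)
  also have "\<dots> \<le> (\<Sum>w\<in>UNIV. \<bar>A $ i $ w\<bar>) * abs_entry_sum A ^ k"
    unfolding sum_distrib_right by (intro sum_mono mult_left_mono Suc.IH) auto
  also have "\<dots> \<le> abs_entry_sum A ^ Suc k"
    by (simp add: mult_right_mono row_abs_sum_le_abs_entry_sum abs_entry_sum_nonneg)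
  finally show ?case .
qed simp

lemma sums_matrixI:
  fixes f :: "nat \<Rightarrow> real^'n^'m"
  assumes "\<And>i j. (\<lambda>k. f k $ i $ j) sums S $ i $ j"
  shows "f sums S"
proof -
  have "(\<Sum>k<n. f k) = (\<chi> i j. \<Sum>k<n. f k $ i $ j)" for n
    by (simp add: vec_eq_iff)
  moreover have "(\<lambda>n. \<chi> i j. \<Sum>k<n. f k $ i $ j) \<longlonglongrightarrow> (\<chi> i j. S $ i $ j)"
    using assms by (intro tendsto_vec_lambda) (simp add: sums_def)
  ultimately show ?thesis by (simp add: sums_def)
qed

lemma mat_exp_entry_sums:
  fixes A :: "real^'n^'n"
  shows "(\<lambda>k. mat_pow A k $ i $ j / fact k) sums (mat_exp A $ i $ j)"
proof -
  have summable: "summable (\<lambda>k. mat_pow A k $ i $ j / fact k)" for i j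
  proof (rule summable_comparison_test')
    show "summable (\<lambda>k. abs_entry_sum A ^ k /\<^sub>R fact k)"
      by (rule summable_exp_generic)
    show "norm (mat_pow A k $ i $ j / fact k) \<le> abs_entry_sum A ^ k /\<^sub>R fact k" for k
      using abs_mat_pow_entry_le[of A k i j] by (simp add: divide_inverse_commute abs_mult mult_left_mono)
  qed
  define S :: "real^'n^'n" where "S = (\<chi> i j. \<Sum>k. mat_pow A k $ i $ j / fact k)"
  have "(\<lambda>k. (1 / fact k) *\<^sub>R mat_pow A k) sums S"
    by (rule sums_matrixI) (use summable_sums[OF summable] in \<open>simp add: S_def\<close>)
  then have "mat_exp A = S"
    unfolding mat_exp_def by (rule sums_unique[symmetric])
  then show ?thesis
    using summable_sums[OF summable] by (simp add: S_def)
qed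

text \<open>The tail of the exponential series, \<open>\<Sum>\<^sub>k\<^sub>\<ge>\<^sub>2 M\<^sup>k/k!\<close> with \<open>M = abs_entry_sum A \<le> 1/2\<close>,
  is dominated by the geometric series \<open>M\<^sup>2 \<Sum>\<^sub>k 2\<^sup>-\<^sup>k\<close>.\<close>

lemma mat_exp_entry_le_second_order:
  assumes small: "abs_entry_sum A \<le> 1/2"
  shows "mat_exp A $ i $ j \<le> mat 1 $ i $ j + A $ i $ j + 2 * abs_entry_sum A ^ 2"
proof -
  define M where "M = abs_entry_sum A"
  have M: "0 \<le> M" "M \<le> 1/2"
    using small abs_entry_sum_nonneg by (auto simp: M_def)
  define g where "g k = mat_pow A k $ i $ j / fact k" for k
  have g: "g sums mat_exp A $ i $ j"
    unfolding g_def by (rule mat_exp_entry_sums)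
  have tail_bound: "g (k + 2) \<le> (1/2) ^ k * M ^ 2" for k
  proof -
    have "g (k + 2) \<le> \<bar>mat_pow A (k + 2) $ i $ j\<bar> / fact (k + 2)"
      unfolding g_def by (simp add: divide_right_mono)
    also have "\<dots> \<le> \<bar>mat_pow A (k + 2) $ i $ j\<bar>"
      using frac_le[where x = "\<bar>mat_pow A (k + 2) $ i $ j\<bar>" and y = "\<bar>mat_pow A (k + 2) $ i $ j\<bar>"
          and w = 1 and z = "fact (k + 2)"] fact_ge_1[of "k + 2", where 'a = real]
      by simp
    also have "\<dots> \<le> M ^ (k + 2)"
      unfolding M_def by (rule abs_mat_pow_entry_le)
    also have "\<dots> = M ^ k * M ^ 2"
      by (rule power_add)
    also have "\<dots> \<le> (1/2) ^ k * M ^ 2"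
      using M by (intro mult_right_mono power_mono) auto
    finally show ?thesis .
  qed
  have geometric: "(\<lambda>k. (1/2) ^ k * M ^ 2) sums (2 * M ^ 2)"
    using sums_mult2[OF geometric_sums[of "1/2::real"], of "M ^ 2"] by simp
  have "mat_exp A $ i $ j = (\<Sum>k. g (k + 2)) + (g 0 + g 1)"
    using suminf_split_initial_segment[OF sums_summable[OF g], of 2] sums_unique[OF g]
    by (simp add: numeral_2_eq_2)
  also have "(\<Sum>k. g (k + 2)) \<le> 2 * M ^ 2"
    using suminf_le[OF tail_bound summable_ignore_initial_segment[OF sums_summable[OF g]]
        sums_summable[OF geometric]] sums_unique[OF geometric] by simp
  finally show ?thesis
    by (simp add: g_def M_def mat_pow_Suc)
qed

lemma mat_exp_neg_scaleR_entry_neg: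
  assumes "u \<noteq> v" and pos: "A $ u $ v > 0"
  obtains t where "t > 0" "mat_exp ((- t) *\<^sub>R A) $ u $ v < 0"
proof -
  define M where "M = abs_entry_sum A"
  define a where "a = A $ u $ v"
  have "0 < a" "a \<le> M"
    using pos abs_entry_le_abs_entry_sum[of A u v] by (auto simp: a_def M_def)
  then have "0 < M" by linarith
  define t where "t = a / (4 * M ^ 2)"
  have "0 < t"
    using \<open>0 < a\<close> \<open>0 < M\<close> by (simp add: t_def)
  have "t * M = a / (4 * M)"
    using \<open>0 < M\<close> by (simp add: t_def power2_eq_square)
  also have "\<dots> \<le> 1/2"
    using \<open>a \<le> M\<close> \<open>0 < M\<close> by (simp add: field_simps)
  moreover have tM: "abs_entry_sum ((- t) *\<^sub>R A) = t * M"
    using abs_entry_sum_scaleR[of "- t" A] \<open>0 < t\<close> by (simp add: M_def)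
  ultimately have small: "abs_entry_sum ((- t) *\<^sub>R A) \<le> 1/2"
    by simp
  have "mat_exp ((- t) *\<^sub>R A) $ u $ v \<le> - t * a + 2 * (t * M) ^ 2"
    using mat_exp_entry_le_second_order[OF small, of u v] \<open>u \<noteq> v\<close>
    unfolding tM by (simp add: a_def)
  also have "\<dots> = - t * a / 2"
    using \<open>0 < M\<close> by (simp add: t_def power2_eq_square field_simps)
  also have "\<dots> < 0"
    using \<open>0 < t\<close> \<open>0 < a\<close> by simp
  finally show ?thesis
    using that \<open>0 < t\<close> by blast
qed

lemma mat_exp_mult_vec_zero:
  assumes "(A::real^'n^'n) *v x = 0"
  shows "mat_exp A *v x = x"
proof -
  have "(mat_exp A *v x) $ i = x $ i" for i
  proof -
    have "(\<lambda>k. \<Sum>j\<in>UNIV. mat_pow A k $ i $ j / fact k * x $ j)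
        sums (\<Sum>j\<in>UNIV. mat_exp A $ i $ j * x $ j)"
      by (intro sums_sum sums_mult2 mat_exp_entry_sums)
    moreover have "(\<Sum>j\<in>UNIV. mat_pow A k $ i $ j / fact k * x $ j) = (if k = 0 then x $ i else 0)"
      for k using mat_pow_mult_vec_zero[OF assms, of k]
      by (auto simp: vec_eq_iff matrix_vector_mult_def sum_divide_distrib[symmetric])
    ultimately have "(\<lambda>k. if k = 0 then x $ i else 0) sums (mat_exp A *v x) $ i"
      by (simp add: matrix_vector_mult_def)
    then show ?thesis
      using sums_single[of 0 "\<lambda>_. x $ i"] by (simp add: sums_unique2)
  qed
  then show ?thesis
    by (simp add: vec_eq_iff)
qed

lemma mat_exp_scaleR_idempotent:
  assumes "(P::real^'n^'n) ** P = P"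
  shows "mat_exp (c *\<^sub>R P) = mat 1 + (exp c - 1) *\<^sub>R P"
proof -
  have "mat_exp (c *\<^sub>R P) $ i $ j = exp c * P $ i $ j + (mat 1 $ i $ j - P $ i $ j)" for i j
  proof -
    have "(\<lambda>k. mat_pow (c *\<^sub>R P) k $ i $ j / fact k)
        = (\<lambda>k. c ^ k /\<^sub>R fact k * P $ i $ j + (if k = 0 then mat 1 $ i $ j - P $ i $ j else 0))"
      by (auto simp: fun_eq_iff mat_pow_scaleR mat_pow_idempotent[OF assms] divide_inverse)
    moreover have "\<dots> sums (exp c * P $ i $ j + (mat 1 $ i $ j - P $ i $ j))"
      using sums_single[of 0 "\<lambda>_. mat 1 $ i $ j - P $ i $ j"]
      by (intro sums_add sums_mult2 exp_converges) simp
    ultimately have "(\<lambda>k. mat_pow (c *\<^sub>R P) k $ i $ j / fact k)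
        sums (exp c * P $ i $ j + (mat 1 $ i $ j - P $ i $ j))"
      by simp
    then show ?thesis
      by (rule sums_unique2[OF mat_exp_entry_sums])
  qed
  then show ?thesis
    by (simp add: vec_eq_iff algebra_simps)
qed

lemma laplacian_entry:
  "laplacian E $ u $ v = (if u = v then real (card {w. E u w}) else if E u v then -1 else 0)"
  by (simp add: laplacian_def)

lemma laplacian_mult_ones:
  assumes "simple_graph E"
  shows "laplacian E *v 1 = 0"
proof -
  have "(\<Sum>v\<in>UNIV. laplacian E $ u $ v) = 0" for u
  proof -
    have "\<not> E u u"
      using assms by (simp add: simple_graph_def)
    then have "(\<Sum>v\<in>UNIV. laplacian E $ u $ v)
        = (\<Sum>v\<in>UNIV. (if v = u then real (card {w. E u w}) else 0) - (if E u v then 1 else 0))"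
      by (intro sum.cong) (auto simp: laplacian_entry)
    also have "\<dots> = 0"
      by (simp add: sum_subtractf sum.If_cases)
    finally show ?thesis .
  qed
  then show ?thesis
    by (simp add: vec_eq_iff matrix_vector_mult_def)
qed

definition centering_matrix :: "real^'n^'n" where
  "centering_matrix = (\<chi> i j. (if i = j then 1 else 0) - 1 / real CARD('n))"

lemma centering_matrix_idempotent:
  "centering_matrix ** centering_matrix = (centering_matrix :: real^'n^'n)"
proof -
  define c where "c = 1 / real CARD('n)"
  have Nc: "real CARD('n) * c = 1"
    by (simp add: c_def)
  have "((if i = w then 1 else 0) - c) * ((if w = j then 1 else 0) - c)
      = (if w = i then (if i = j then 1 else 0) - c else 0) - (if w = j then c else 0) + c\<^sup>2"
    for i j w :: 'n
    by (auto simp: algebra_simps power2_eq_square)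
  then have "(\<Sum>w\<in>UNIV. ((if i = w then 1 else 0) - c) * ((if w = j then 1 else 0) - c))
      = (if i = j then 1 else 0) - c - c + real CARD('n) * c * c" for i j :: 'n
    by (simp add: sum.distrib sum_subtractf power2_eq_square)
  then show ?thesis
    by (simp add: vec_eq_iff matrix_mult_entry centering_matrix_def c_def[symmetric] Nc)
qed

lemma laplacian_complete_graph:
  fixes E :: "'v::finite \<Rightarrow> 'v \<Rightarrow> bool"
  assumes "simple_graph E" and "complete_graph E"
  shows "laplacian E = real CARD('v) *\<^sub>R centering_matrix"
proof -
  have "{w. E u w} = UNIV - {u}" for u
    using assms by (auto simp: simple_graph_def complete_graph_def)
  then have "real (card {w. E u w}) = real CARD('v) - 1" for u
    by (simp add: card_Diff_singleton of_nat_diff Suc_le_eq)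
  then show ?thesis
    using assms(2)
    by (auto simp: vec_eq_iff laplacian_entry centering_matrix_def complete_graph_def right_diff_distrib)
qed

lemma heat_kernel_complete_graph_nonneg:
  fixes E :: "'v::finite \<Rightarrow> 'v \<Rightarrow> bool"
  assumes "simple_graph E" and "complete_graph E" and "t \<ge> 0"
  shows "0 \<le> mat_exp ((- t) *\<^sub>R (laplacian E ** laplacian E)) $ u $ v"
proof -
  define N where "N = real CARD('v)"
  define c where "c = - t * N\<^sup>2"
  have "(- t) *\<^sub>R (laplacian E ** laplacian E) = c *\<^sub>R centering_matrix"
    by (simp add: laplacian_complete_graph[OF assms(1,2)] scaleR_matrix_mult_left
        scaleR_matrix_mult_right centering_matrix_idempotent c_def N_def power2_eq_square)
  then have heat_kernel: "mat_exp ((- t) *\<^sub>R (laplacian E ** laplacian E))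
      = mat 1 + (exp c - 1) *\<^sub>R centering_matrix"
    by (simp only: mat_exp_scaleR_idempotent[OF centering_matrix_idempotent])
  have "mat_exp ((- t) *\<^sub>R (laplacian E ** laplacian E)) $ u $ v
      = exp c * (if u = v then 1 else 0) + (1 - exp c) / N"
    unfolding heat_kernel by (simp add: centering_matrix_def N_def algebra_simps diff_divide_distrib)
  moreover have "exp c \<le> 1"
    using assms(3) by (simp add: c_def)
  ultimately show ?thesis
    by (simp add: N_def)
qed

lemma connected_not_complete_obtains_path2:
  assumes "connected_graph E" and "\<not> complete_graph E"
  obtains u v w where "u \<noteq> v" "\<not> E u v" "E u w" "E w v"
proof -
  obtain x y where "x \<noteq> y" "\<not> E x y"
    using assms(2) by (auto simp: complete_graph_def)
  have "z = x \<or> E x z \<or> (\<exists>u v w. u \<noteq> v \<and> \<not> E u v \<and> E u w \<and> E w v)" if "E\<^sup>*\<^sup>* x z" for z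
    using that
  proof (induction rule: rtranclp_induct)
    case (step y z)
    show ?case
    proof (cases "z = x \<or> E x z")
      case False
      with step have "x \<noteq> z \<and> \<not> E x z \<and> E x y \<and> E y z \<or> (\<exists>u v w. u \<noteq> v \<and> \<not> E u v \<and> E u w \<and> E w v)"
        by auto
      then show ?thesis
        by blast
    qed blast
  qed simp
  then have "y = x \<or> E x y \<or> (\<exists>u v w. u \<noteq> v \<and> \<not> E u v \<and> E u w \<and> E w v)"
    using assms(1) by (simp add: connected_graph_def)
  then show ?thesis
    using that \<open>x \<noteq> y\<close> \<open>\<not> E x y\<close> by blast
qed

text \<open>In (L^2)(u,v) = \<open>\<Sum>\<^sub>w\<close> L(u,w) L(w,v) the terms w = u and w = v vanish since L(u,v) = 0, and every
  other term is a product of two nonpositive numbers, which is 1 for a common neighbour w.\<close>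

lemma laplacian_sq_entry_pos:
  assumes "simple_graph E" and "u \<noteq> v" "\<not> E u v" and "E u w" "E w v"
  shows "(laplacian E ** laplacian E) $ u $ v > 0"
proof -
  have sym: "E a b \<Longrightarrow> E b a" and irrefl: "\<not> E a a" for a b
    using assms(1) by (auto simp: simple_graph_def)
  have "w \<noteq> u" "w \<noteq> v"
    using assms(4,5) irrefl by auto
  show ?thesis
    unfolding matrix_mult_entry
  proof (rule sum_pos2[of UNIV w])
    show "0 < laplacian E $ u $ w * laplacian E $ w $ v"
      using \<open>w \<noteq> u\<close> \<open>w \<noteq> v\<close> assms(4,5) by (simp add: laplacian_entry)
    show "0 \<le> laplacian E $ u $ i * laplacian E $ i $ v" for i
      using assms(2,3) sym by (auto simp: laplacian_entry)
  qed auto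
qed

lemma heat_kernel_nonneg_iff_complete_graph:
  fixes E :: "'v::finite \<Rightarrow> 'v \<Rightarrow> bool"
  assumes "simple_graph E" and "connected_graph E"
  shows "(\<forall>t\<ge>0. \<forall>u v. 0 \<le> mat_exp ((- t) *\<^sub>R (laplacian E ** laplacian E)) $ u $ v)
    \<longleftrightarrow> complete_graph E"
proof
  assume nonneg: "\<forall>t\<ge>0. \<forall>u v. 0 \<le> mat_exp ((- t) *\<^sub>R (laplacian E ** laplacian E)) $ u $ v"
  show "complete_graph E"
  proof (rule ccontr)
    assume "\<not> complete_graph E"
    then obtain u v w where "u \<noteq> v" "\<not> E u v" "E u w" "E w v"
      using connected_not_complete_obtains_path2 assms(2) by blast
    then have "(laplacian E ** laplacian E) $ u $ v > 0"
      using laplacian_sq_entry_pos assms(1) by blast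
    then obtain t where "t > 0" "mat_exp ((- t) *\<^sub>R (laplacian E ** laplacian E)) $ u $ v < 0"
      using mat_exp_neg_scaleR_entry_neg \<open>u \<noteq> v\<close> by blast
    moreover have "0 \<le> mat_exp ((- t) *\<^sub>R (laplacian E ** laplacian E)) $ u $ v"
      using nonneg \<open>t > 0\<close> by simp
    ultimately show False
      by linarith
  qed
qed (use heat_kernel_complete_graph_nonneg assms(1) in blast)

lemma norm_le_sup_norm: "cmod (f v) \<le> sup_norm f"
  unfolding sup_norm_def by (rule Max_ge) auto

lemma sup_norm_le: "(\<And>v. cmod (f v) \<le> b) \<Longrightarrow> sup_norm f \<le> b"
  unfolding sup_norm_def by (subst Max_le_iff) auto

lemma mat_act_indicator: "mat_act M (\<lambda>w. if w = v then 1 else 0) u = complex_of_real (M $ u $ v)"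
  by (simp add: mat_act_def if_distrib cong: if_cong)

lemma mat_act_positive_iff_nonneg:
  "(\<forall>f. (\<forall>v. f v \<in> \<real> \<and> Re (f v) \<ge> 0) \<longrightarrow> (\<forall>u. mat_act M f u \<in> \<real> \<and> Re (mat_act M f u) \<ge> 0))
    \<longleftrightarrow> (\<forall>u v. 0 \<le> M $ u $ v)"
proof
  assume "\<forall>f. (\<forall>v. f v \<in> \<real> \<and> Re (f v) \<ge> 0) \<longrightarrow> (\<forall>u. mat_act M f u \<in> \<real> \<and> Re (mat_act M f u) \<ge> 0)"
  from this[rule_format, of "\<lambda>w. if w = v then 1 else 0" for v] show "\<forall>u v. 0 \<le> M $ u $ v"
    by (simp add: mat_act_indicator)
next
  assume nonneg: "\<forall>u v. 0 \<le> M $ u $ v"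
  show "\<forall>f. (\<forall>v. f v \<in> \<real> \<and> Re (f v) \<ge> 0) \<longrightarrow> (\<forall>u. mat_act M f u \<in> \<real> \<and> Re (mat_act M f u) \<ge> 0)"
  proof (intro allI impI)
    fix f :: "'a \<Rightarrow> complex" and u
    assume f: "\<forall>v. f v \<in> \<real> \<and> Re (f v) \<ge> 0"
    then have "mat_act M f u = of_real (\<Sum>v\<in>UNIV. M $ u $ v * Re (f v))"
      by (simp add: mat_act_def complex_is_Real_iff complex_eq_iff)
    moreover have "0 \<le> (\<Sum>v\<in>UNIV. M $ u $ v * Re (f v))"
      using nonneg f by (simp add: sum_nonneg)
    ultimately show "mat_act M f u \<in> \<real> \<and> Re (mat_act M f u) \<ge> 0"
      by simp
  qed
qed

lemma mat_act_contractive_iff_nonneg: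
  assumes rows: "M *v 1 = 1"
  shows "(\<forall>f. sup_norm (mat_act M f) \<le> sup_norm f) \<longleftrightarrow> (\<forall>u v. 0 \<le> M $ u $ v)"
proof -
  have row_sum: "(\<Sum>v\<in>UNIV. M $ u $ v) = 1" for u
    using rows by (simp add: vec_eq_iff matrix_vector_mult_def)
  show ?thesis
  proof
    assume contractive: "\<forall>f. sup_norm (mat_act M f) \<le> sup_norm f"
    show "\<forall>u v. 0 \<le> M $ u $ v"
    proof (rule ccontr)
      assume "\<not> (\<forall>u v. 0 \<le> M $ u $ v)"
      then obtain u v where neg: "M $ u $ v < 0"
        by (auto simp: not_le)
      define f where "f w = (if 0 \<le> M $ u $ w then 1 else - 1 :: complex)" for w
      have "sup_norm f \<le> 1"
        by (rule sup_norm_le) (simp add: f_def)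
      have "mat_act M f u = complex_of_real (\<Sum>w\<in>UNIV. \<bar>M $ u $ w\<bar>)"
        unfolding mat_act_def of_real_sum by (rule sum.cong) (auto simp: f_def)
      then have "cmod (mat_act M f u) = (\<Sum>w\<in>UNIV. \<bar>M $ u $ w\<bar>)"
        by (simp only: norm_of_real abs_sum_abs)
      also have "\<dots> > (\<Sum>w\<in>UNIV. M $ u $ w)"
        using neg by (intro sum_strict_mono_ex1) (auto intro!: exI[of _ v])
      finally have "cmod (mat_act M f u) > 1"
        by (simp add: row_sum)
      moreover have "cmod (mat_act M f u) \<le> 1"
        using norm_le_sup_norm[of "mat_act M f" u] contractive[rule_format, of f] \<open>sup_norm f \<le> 1\<close>
        by linarith
      ultimately show False
        by simp
    qed
  next
    assume nonneg: "\<forall>u v. 0 \<le> M $ u $ v"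
    show "\<forall>f. sup_norm (mat_act M f) \<le> sup_norm f"
    proof (intro allI sup_norm_le)
      fix f u
      have "cmod (mat_act M f u) \<le> (\<Sum>v\<in>UNIV. M $ u $ v * cmod (f v))"
        unfolding mat_act_def using norm_sum[of "\<lambda>v. complex_of_real (M $ u $ v) * f v" UNIV] nonneg
        by (simp add: norm_mult)
      also have "\<dots> \<le> (\<Sum>v\<in>UNIV. M $ u $ v * sup_norm f)"
        using nonneg by (intro sum_mono mult_left_mono norm_le_sup_norm) auto
      also have "\<dots> = sup_norm f"
        by (simp add: sum_distrib_right[symmetric] row_sum)
      finally show "cmod (mat_act M f u) \<le> sup_norm f" .
    qed
  qed
qed

theorem proposition2p3:
  fixes E :: "'v::finite \<Rightarrow> 'v \<Rightarrow> bool"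
  assumes "simple_graph E" and "connected_graph E"
  defines "S \<equiv> (\<lambda>t::real. mat_exp ((- t) *\<^sub>R (laplacian E ** laplacian E)))"
  shows "(complete_graph E
            \<longleftrightarrow> (\<forall>t\<ge>0. \<forall>f::'v \<Rightarrow> complex. (\<forall>v. f v \<in> \<real> \<and> Re (f v) \<ge> 0)
                    \<longrightarrow> (\<forall>u. mat_act (S t) f u \<in> \<real> \<and> Re (mat_act (S t) f u) \<ge> 0)))
       \<and> (complete_graph E
            \<longleftrightarrow> (\<forall>t\<ge>0. \<forall>f::'v \<Rightarrow> complex. sup_norm (mat_act (S t) f) \<le> sup_norm f))"
proof -
  have row_sums: "S t *v 1 = 1" for t
  proof -
    have "(laplacian E ** laplacian E) *v 1 = 0"
      by (simp add: matrix_vector_mul_assoc[symmetric] laplacian_mult_ones[OF assms(1)])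
    then have "((- t) *\<^sub>R (laplacian E ** laplacian E)) *v 1 = 0"
      by (metis scaleR_matrix_vector_assoc scaleR_zero_right)
    then show ?thesis
      unfolding S_def by (rule mat_exp_mult_vec_zero)
  qed
  have nonneg: "complete_graph E \<longleftrightarrow> (\<forall>t\<ge>0. \<forall>u v. 0 \<le> S t $ u $ v)"
    using heat_kernel_nonneg_iff_complete_graph[OF assms(1,2)] by (simp add: S_def)
  show ?thesis
    unfolding nonneg mat_act_positive_iff_nonneg mat_act_contractive_iff_nonneg[OF row_sums]
    by simp
qed

end
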